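(* Let $J$ be a smooth almost complex structure defined on a neighborhood $U$ of the origin in $\mathbb{C}^n$, with coordinates $Z=(w,z)$, $w\in\mathbb{C}$, $z=(z_2,\dots,z_n)\in\mathbb{C}^{n-1}$, such that $J(0)=J_{st}$ and the map $\zeta\mapsto(\zeta,0,\dots,0)$ is $J$-holomorphic (on the set of $\zeta$ with $(\zeta,0,\dots,0)\in U$). For $\delta>0$ let $\Lambda_\delta(w,z) = (\delta^{-1/2}w, \delta^{-1}z)$ and let $J_\delta := (\Lambda_\delta)_*(J) = d\Lambda_\delta\circ J\circ (d\Lambda_\delta)^{-1}$, an almost complex structure on $\Lambda_\delta(U)$. Then for every $k>0$ and every compact set $K\subset\mathbb{C}^n$ we have $\|J_\delta - J_{st}\|_{C^k(K)} \to 0$ as $\delta\to 0$.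
   Context: $J_{st}$ is the standard complex structure of $\mathbb{C}^n$; almost complex structures on domains of $\mathbb{C}^n\cong\mathbb{R}^{2n}$ are viewed as smooth real $2n\times 2n$ matrix-valued functions. A smooth map $f$ from a domain of $\mathbb{C}$ to $U$ is $J$-holomorphic if $df\circ J_{st} = J\circ df$. For a compact $K$, $J_\delta$ is defined on $K$ for all sufficiently small $\delta$. *)

theory Defs
  imports "HOL-Analysis.Analysis"
begin

text \<open>Points of C^n are vectors complex^'n (n = CARD('n)), viewed as the real
  vector space R^{2n}.  A (pointwise) real-linear endomorphism field
  J :: complex^'n => complex^'n => complex^'n is an almost complex structure;
  its real matrix entries w.r.t. the orthonormal real basis are given below.\<close>

type_synonym 'n cvec = "complex ^ 'n"

definition Jst :: "'n::finite cvec \<Rightarrow> 'n cvec" where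
  "Jst v = (\<chi> j. \<i> * v $ j)"

definition mat_entry :: "('a::real_inner \<Rightarrow> 'a) \<Rightarrow> 'a \<Rightarrow> 'a \<Rightarrow> real" where
  "mat_entry A b c = A b \<bullet> c"

definition partial :: "'a::real_normed_vector \<Rightarrow> ('a \<Rightarrow> real) \<Rightarrow> 'a \<Rightarrow> real" where
  "partial b f x = frechet_derivative f (at x) b"

fun iter_partial :: "'a::real_normed_vector list \<Rightarrow> ('a \<Rightarrow> real) \<Rightarrow> 'a \<Rightarrow> real" where
  "iter_partial [] f = f"
| "iter_partial (b # bs) f = partial b (iter_partial bs f)"

definition smooth_on :: "'a::euclidean_space set \<Rightarrow> ('a \<Rightarrow> real) \<Rightarrow> bool" where
  "smooth_on U f \<longleftrightarrow> (\<forall>bs\<in>lists Basis. \<forall>x\<in>U. iter_partial bs f differentiable (at x))"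

definition almost_complex_on :: "'a::euclidean_space set \<Rightarrow> ('a \<Rightarrow> 'a \<Rightarrow> 'a) \<Rightarrow> bool" where
  "almost_complex_on U J \<longleftrightarrow>
     (\<forall>p\<in>U. linear (J p) \<and> (\<forall>v. J p (J p v) = - v)) \<and>
     (\<forall>b\<in>Basis. \<forall>c\<in>Basis. smooth_on U (\<lambda>p. mat_entry (J p) b c))"

definition J_holomorphic_on :: "complex set \<Rightarrow> ('a::real_normed_vector \<Rightarrow> 'a \<Rightarrow> 'a) \<Rightarrow> (complex \<Rightarrow> 'a) \<Rightarrow> bool" where
  "J_holomorphic_on D J f \<longleftrightarrow>
     (\<forall>\<zeta>\<in>D. f differentiable (at \<zeta>) \<and>
        (\<forall>h. frechet_derivative f (at \<zeta>) (\<i> * h) = J (f \<zeta>) (frechet_derivative f (at \<zeta>) h)))"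

text \<open>The distinguished coordinate i0 plays the role of w; the others are z.\<close>
definition Lam :: "'n::finite \<Rightarrow> real \<Rightarrow> 'n cvec \<Rightarrow> 'n cvec" where
  "Lam i0 \<delta> v = (\<chi> j. if j = i0 then complex_of_real (\<delta> powr (-1/2)) * v $ j
                          else complex_of_real (1/\<delta>) * v $ j)"

definition Lam_inv :: "'n::finite \<Rightarrow> real \<Rightarrow> 'n cvec \<Rightarrow> 'n cvec" where
  "Lam_inv i0 \<delta> v = (\<chi> j. if j = i0 then complex_of_real (sqrt \<delta>) * v $ j
                          else complex_of_real \<delta> * v $ j)"

text \<open>J_delta = (Lam_delta)_* J = dLam \<circ> J \<circ> (dLam)^{-1}; Lam is linear.\<close>
definition Jdelta :: "'n::finite \<Rightarrow> ('n cvec \<Rightarrow> 'n cvec \<Rightarrow> 'n cvec) \<Rightarrow> real \<Rightarrow> 'n cvec \<Rightarrow> 'n cvec \<Rightarrow> 'n cvec" where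
  "Jdelta i0 J \<delta> p v = Lam i0 \<delta> (J (Lam_inv i0 \<delta> p) (Lam_inv i0 \<delta> v))"

definition axis_emb :: "'n::finite \<Rightarrow> complex \<Rightarrow> 'n cvec" where
  "axis_emb i0 \<zeta> = (\<chi> j. if j = i0 then \<zeta> else 0)"

end

theory Submission
  imports Defs
begin

text \<open>Write \<open>w(e)\<close> for the factor by which \<open>\<Lambda>\<^sub>\<delta>\<inverse>\<close> scales the real basis vector \<open>e\<close>:
  \<open>\<surd>\<delta>\<close> along the \<open>w\<close>-axis and \<open>\<delta>\<close> in the \<open>z\<close>-directions. The \<open>(b, c)\<close> entry of \<open>J\<^sub>\<delta>\<close> at \<open>p\<close>
  is \<open>w(b) / w(c)\<close> times the entry of \<open>J\<close> at \<open>\<Lambda>\<^sub>\<delta>\<inverse> p\<close>, and each partial derivative along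
  \<open>e\<close> contributes a further factor \<open>w(e) \<le> \<surd>\<delta>\<close>. Since \<open>\<Lambda>\<^sub>\<delta>\<inverse> K\<close> lies in a ball of
  radius \<open>O(\<surd>\<delta>)\<close> around \<open>0\<close>, where \<open>J = J\<^sub>s\<^sub>t\<close>, all entries of \<open>J\<^sub>\<delta> - J\<^sub>s\<^sub>t\<close> and their
  derivatives are \<open>O(\<surd>\<delta>)\<close> on \<open>K\<close>, except the entries from a \<open>w\<close>-direction \<open>b\<close> to a
  \<open>z\<close>-direction \<open>c\<close> differentiated only along the \<open>w\<close>-axis, which are amplified by \<open>1/\<surd>\<delta>\<close>.
  As the \<open>w\<close>-axis is \<open>J\<close>-holomorphic, \<open>J\<close> preserves its tangent space along it, so these entries
  and their \<open>w\<close>-derivatives vanish on the axis; \<open>\<Lambda>\<^sub>\<delta>\<inverse> K\<close> lies within distance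
  \<open>O(\<delta>)\<close> of the axis, so they are \<open>O(\<delta>)\<close> there, and \<open>O(\<surd>\<delta>)\<close> after amplification.\<close>

lemma frechet_derivative_cong_open:
  assumes "open S" "x \<in> S" "\<And>y. y \<in> S \<Longrightarrow> f y = g y"
  shows "frechet_derivative f (at x) = frechet_derivative g (at x)"
proof -
  have "(f has_derivative D) (at x) \<longleftrightarrow> (g has_derivative D) (at x)" for D
    using assms by (metis has_derivative_transform_within_open)
  then show ?thesis unfolding frechet_derivative_def by simp
qed

lemma iter_partial_cong_open:
  assumes "open S" "x \<in> S" "\<And>y. y \<in> S \<Longrightarrow> f y = g y"
  shows "iter_partial bs f x = iter_partial bs g x"
  using assms(2)
proof (induction bs arbitrary: x)
  case Nil
  then show ?case using assms(3) by simp
next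
  case (Cons b bs)
  have "frechet_derivative (iter_partial bs f) (at x) = frechet_derivative (iter_partial bs g) (at x)"
    using Cons by (intro frechet_derivative_cong_open[OF assms(1)])
  then show ?case by (simp add: partial_def)
qed

lemma iter_partial_affine_comp_diagonal:
  fixes L :: "'a::real_normed_vector \<Rightarrow> 'a"
  assumes L: "bounded_linear L" and L_diag: "\<And>b. b \<in> D \<Longrightarrow> L b = s b *\<^sub>R b" and "open V"
    and smooth: "\<And>cs y. cs \<in> lists D \<Longrightarrow> y \<in> V \<Longrightarrow> iter_partial cs F differentiable at y"
  shows "bs \<in> lists D \<Longrightarrow> L p \<in> V \<Longrightarrow> iter_partial bs (\<lambda>q. a * F (L q) - \<kappa>) p
     = a * prod_list (map s bs) * iter_partial bs F (L p) - (if bs = [] then \<kappa> else 0)"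
proof (induction bs arbitrary: p)
  case Nil
  then show ?case by simp
next
  case (Cons b bs)
  let ?H = "iter_partial bs F" and ?c = "a * prod_list (map s bs)"
  let ?\<kappa> = "if bs = [] then \<kappa> else 0"
  let ?H' = "frechet_derivative ?H (at (L p))"
  have "open (L -` V)"
    using open_vimage[OF \<open>open V\<close>] L linear_continuous_on by blast
  then have "frechet_derivative (iter_partial bs (\<lambda>q. a * F (L q) - \<kappa>)) (at p)
      = frechet_derivative (\<lambda>q. ?c * ?H (L q) - ?\<kappa>) (at p)"
    by (rule frechet_derivative_cong_open) (use Cons in auto)
  then have local: "iter_partial (b # bs) (\<lambda>q. a * F (L q) - \<kappa>) p
      = frechet_derivative (\<lambda>q. ?c * ?H (L q) - ?\<kappa>) (at p) b"
    by (simp add: partial_def)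
  have H: "(?H has_derivative ?H') (at (L p))"
    using Cons.prems smooth[of bs "L p"] by (simp flip: frechet_derivative_works)
  have "((\<lambda>q. ?c * ?H (L q) - ?\<kappa>) has_derivative (\<lambda>h. ?c * ?H' (L h) - 0)) (at p)"
    using diff_chain_at[OF bounded_linear_imp_has_derivative[OF L] H]
    by (intro derivative_intros) (simp add: o_def)
  then have "frechet_derivative (\<lambda>q. ?c * ?H (L q) - ?\<kappa>) (at p) b = ?c * ?H' (s b *\<^sub>R b)"
    using L_diag Cons.prems by (simp add: frechet_derivative_at[symmetric])
  also have "\<dots> = ?c * s b * ?H' b"
    using has_derivative_linear[OF H] by (simp add: linear_scale)
  finally show ?case
    using local by (simp add: partial_def)
qed

lemma abs_linear_le_Basis_bound:
  fixes D :: "'a::euclidean_space \<Rightarrow> real"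
  assumes "linear D" "\<And>e. e \<in> Basis \<Longrightarrow> \<bar>D e\<bar> \<le> M"
  shows "\<bar>D v\<bar> \<le> real DIM('a) * M * norm v"
proof -
  have "D v = (\<Sum>e\<in>Basis. (v \<bullet> e) * D e)"
    using assms(1) by (subst euclidean_representation[symmetric, of v])
      (simp add: linear_sum linear_scale)
  also have "\<bar>\<dots>\<bar> \<le> (\<Sum>e\<in>Basis. \<bar>v \<bullet> e\<bar> * \<bar>D e\<bar>)"
    unfolding abs_mult[symmetric] by (rule sum_abs)
  also have "\<dots> \<le> (\<Sum>e\<in>(Basis::'a set). norm v * M)"
    using Basis_le_norm assms(2) by (intro sum_mono mult_mono) auto
  finally show ?thesis by (simp add: algebra_simps)
qed

lemma lipschitz_of_bounded_partials:
  fixes H :: "'a::euclidean_space \<Rightarrow> real"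
  assumes "convex S" and diff: "\<And>q. q \<in> S \<Longrightarrow> H differentiable at q"
    and bound: "\<And>q e. q \<in> S \<Longrightarrow> e \<in> Basis \<Longrightarrow> \<bar>partial e H q\<bar> \<le> M"
    and "y \<in> S" "z \<in> S"
  shows "\<bar>H y - H z\<bar> \<le> real DIM('a) * M * norm (y - z)"
proof -
  have "norm (H y - H z) \<le> real DIM('a) * M * norm (y - z)"
  proof (rule differentiable_bound[OF \<open>convex S\<close> _ _ \<open>y \<in> S\<close> \<open>z \<in> S\<close>])
    fix x assume "x \<in> S"
    then have H: "(H has_derivative frechet_derivative H (at x)) (at x)"
      using diff frechet_derivative_works by blast
    then show "(H has_derivative frechet_derivative H (at x)) (at x within S)"
      by (rule has_derivative_at_withinI)
    show "onorm (frechet_derivative H (at x)) \<le> real DIM('a) * M"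
      using bound[OF \<open>x \<in> S\<close>] has_derivative_linear[OF H]
      by (intro onorm_le) (simp add: abs_linear_le_Basis_bound partial_def)
  qed
  then show ?thesis by simp
qed

lemma partial_eq_0_if_vanishes_on_line:
  fixes G :: "'a::real_normed_vector \<Rightarrow> real"
  assumes "open U" "y \<in> U" "G differentiable at y"
    and vanish: "\<And>t. y + t *\<^sub>R b \<in> U \<Longrightarrow> G (y + t *\<^sub>R b) = 0"
  shows "partial b G y = 0"
proof -
  let ?D = "frechet_derivative G (at y)"
  have line: "((\<lambda>t. y + t *\<^sub>R b) has_derivative (\<lambda>t. t *\<^sub>R b)) (at 0)"
    by (auto intro!: derivative_eq_intros)
  have G: "(G has_derivative ?D) (at (y + 0 *\<^sub>R b))"
    using assms(3) by (simp flip: frechet_derivative_works)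
  have chain: "((\<lambda>t. G (y + t *\<^sub>R b)) has_derivative (\<lambda>t. ?D (t *\<^sub>R b))) (at 0)"
    using diff_chain_at[OF line G] by (simp add: o_def)
  have "open ((\<lambda>t::real. y + t *\<^sub>R b) -` U)"
    using assms(1) by (intro open_vimage continuous_intros)
  then have "((\<lambda>t. G (y + t *\<^sub>R b)) has_derivative (\<lambda>t. 0)) (at 0)"
    by (rule has_derivative_transform_within_open[OF has_derivative_const])
      (use assms(2) vanish in auto)
  then have "(\<lambda>t. ?D (t *\<^sub>R b)) = (\<lambda>t. 0)"
    using has_derivative_unique[OF chain] by blast
  then show ?thesis
    unfolding partial_def by (metis scaleR_one)
qed

lemma iter_partial_vanishes_on_subspace:
  fixes F :: "'a::real_normed_vector \<Rightarrow> real"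
  assumes "open U" "subspace A"
    and smooth: "\<And>cs y. cs \<in> lists D \<Longrightarrow> y \<in> U \<Longrightarrow> iter_partial cs F differentiable at y"
    and vanish: "\<And>y. y \<in> U \<inter> A \<Longrightarrow> F y = 0"
  shows "bs \<in> lists (D \<inter> A) \<Longrightarrow> y \<in> U \<inter> A \<Longrightarrow> iter_partial bs F y = 0"
proof (induction bs arbitrary: y)
  case Nil
  then show ?case using vanish by simp
next
  case (Cons b bs)
  have "y + t *\<^sub>R b \<in> A" for t
    using Cons.prems \<open>subspace A\<close> by (simp add: subspace_add subspace_scale)
  then have "partial b (iter_partial bs F) y = 0"
    using Cons assms(1) smooth
    by (intro partial_eq_0_if_vanishes_on_line) auto
  then show ?case by simp
qed

lemma finite_family_uniformly_bounded:
  fixes f :: "'i \<Rightarrow> 'a::metric_space \<Rightarrow> real"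
  assumes "finite I" "compact S" "\<And>i. i \<in> I \<Longrightarrow> continuous_on S (f i)"
  shows "\<exists>M\<ge>0. \<forall>i\<in>I. \<forall>x\<in>S. \<bar>f i x\<bar> \<le> M"
proof -
  have "bounded (\<Union>i\<in>I. f i ` S)"
    using assms by (intro bounded_UN ballI compact_imp_bounded compact_continuous_image) auto
  then obtain M where "M > 0" "\<forall>y\<in>(\<Union>i\<in>I. f i ` S). \<bar>y\<bar> \<le> M"
    by (auto simp: bounded_pos)
  then show ?thesis by (intro exI[of _ M]) auto
qed

lemma abs_mult_mult_le:
  fixes a p d :: real
  assumes "0 \<le> a" "a \<le> A" "0 \<le> p" "p \<le> P" "\<bar>d\<bar> \<le> D"
  shows "\<bar>a * p * d\<bar> \<le> A * P * D"
proof -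
  have "\<bar>a * p * d\<bar> = a * p * \<bar>d\<bar>"
    using assms(1,3) by (simp add: abs_mult)
  also have "\<dots> \<le> A * P * D"
    using assms by (intro mult_mono) auto
  finally show ?thesis .
qed

lemma prod_list_le_member:
  fixes xs :: "real list"
  assumes "\<forall>x\<in>set xs. 0 \<le> x \<and> x \<le> 1" "y \<in> set xs"
  shows "prod_list xs \<le> y"
  using assms
proof (induction xs)
  case Nil
  then show ?case by simp
next
  case (Cons a xs)
  have "0 \<le> prod_list xs \<and> prod_list xs \<le> 1"
    using Cons.prems(1) by (induction xs) (auto intro: mult_le_one)
  then show ?case
    using Cons by (cases "y = a") (auto intro: mult_left_le mult_left_le_one_le order_trans)
qed

lemma real_le_sqrt_self: "0 \<le> x \<Longrightarrow> x \<le> 1 \<Longrightarrow> x \<le> sqrt (x::real)"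
  by (intro real_le_rsqrt) (simp add: power2_eq_square mult_left_le)

lemma norm_vec_le_scaled:
  fixes x y :: "'a::real_normed_vector ^ 'n::finite"
  assumes "\<And>j. norm (y $ j) \<le> r * norm (x $ j)" "0 \<le> r"
  shows "norm y \<le> r * norm x"
proof -
  have "norm y \<le> L2_set (\<lambda>j. r * norm (x $ j)) UNIV"
    unfolding norm_vec_def by (rule L2_set_mono) (use assms in auto)
  also have "\<dots> = r * norm x"
    by (simp add: norm_vec_def L2_set_right_distrib[OF assms(2)])
  finally show ?thesis .
qed

lemma Basis_cvecE:
  assumes "(b::'n::finite cvec) \<in> Basis"
  obtains j u where "u \<in> {1, \<i>}" "b = axis j u" "b $ i = 0 \<longleftrightarrow> j \<noteq> i"
proof -
  obtain j u where "u \<in> {1, \<i>}" "b = axis j u"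
    using assms by (auto simp: Basis_vec_def Basis_complex_def)
  moreover have "b $ i = 0 \<longleftrightarrow> j \<noteq> i"
    using calculation by (auto simp: axis_def)
  ultimately show ?thesis using that by blast
qed

definition weight :: "'n::finite \<Rightarrow> real \<Rightarrow> 'n cvec \<Rightarrow> real" where
  "weight i0 \<delta> b = (if b $ i0 = 0 then \<delta> else sqrt \<delta>)"

lemma weight_pos: "0 < \<delta> \<Longrightarrow> 0 < weight i0 \<delta> b"
  by (simp add: weight_def)

lemma weight_le_sqrt: "0 < \<delta> \<Longrightarrow> \<delta> \<le> 1 \<Longrightarrow> weight i0 \<delta> b \<le> sqrt \<delta>"
  by (simp add: weight_def real_le_sqrt_self)

lemma prod_list_weight_nonneg: "0 < \<delta> \<Longrightarrow> 0 \<le> prod_list (map (weight i0 \<delta>) bs)"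
  by (rule prod_list_nonneg) (auto simp: weight_def)

lemma prod_list_weight_le_1:
  "0 < \<delta> \<Longrightarrow> \<delta> \<le> 1 \<Longrightarrow> prod_list (map (weight i0 \<delta>) bs) \<le> 1"
  by (induction bs) (auto simp: weight_def intro: mult_le_one prod_list_weight_nonneg)

lemma prod_list_weight_le:
  assumes "0 < \<delta>" "\<delta> \<le> 1" "e \<in> set bs"
  shows "prod_list (map (weight i0 \<delta>) bs) \<le> weight i0 \<delta> e"
  using assms by (intro prod_list_le_member) (auto simp: weight_def)

lemma bounded_linear_Lam_inv: "bounded_linear (Lam_inv i0 \<delta>)"
proof -
  have "linear (Lam_inv i0 \<delta>)"
    by (rule linearI) (auto simp: Lam_inv_def vec_eq_iff algebra_simps scaleR_conv_of_real)
  then show ?thesis by (simp add: linear_conv_bounded_linear)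
qed

lemma Lam_inv_Basis: "b \<in> Basis \<Longrightarrow> Lam_inv i0 \<delta> b = weight i0 \<delta> b *\<^sub>R b"
  by (erule Basis_cvecE[where i = i0])
    (auto simp: vec_eq_iff Lam_inv_def weight_def axis_def complex_eq_iff)

lemma inner_Lam_Basis:
  assumes "0 < \<delta>" "c \<in> Basis"
  shows "Lam i0 \<delta> w \<bullet> c = (w \<bullet> c) / weight i0 \<delta> c"
proof -
  have "\<delta> powr (- 1 / 2) = 1 / sqrt \<delta>"
    using assms(1) by (simp add: powr_minus_divide powr_half_sqrt)
  then show ?thesis
    using assms(2) by (elim Basis_cvecE[where i = i0])
      (auto simp: Lam_def weight_def inner_axis simp flip: scaleR_conv_of_real)
qed

lemma Lam_Lam_inv: "0 < \<delta> \<Longrightarrow> Lam i0 \<delta> (Lam_inv i0 \<delta> x) = x"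
  by (auto simp: Lam_def Lam_inv_def vec_eq_iff powr_minus_divide powr_half_sqrt
      simp flip: of_real_mult)

lemma norm_Lam_inv_le: "0 < \<delta> \<Longrightarrow> \<delta> \<le> 1 \<Longrightarrow> norm (Lam_inv i0 \<delta> x) \<le> sqrt \<delta> * norm x"
  by (rule norm_vec_le_scaled)
    (auto simp: Lam_inv_def norm_mult real_le_sqrt_self intro: mult_right_mono)

lemma norm_Lam_inv_minus_axis_le:
  "0 < \<delta> \<Longrightarrow> norm (Lam_inv i0 \<delta> x - axis_emb i0 (Lam_inv i0 \<delta> x $ i0)) \<le> \<delta> * norm x"
  by (rule norm_vec_le_scaled) (auto simp: Lam_inv_def axis_emb_def norm_mult)

lemma norm_axis_emb_nth_le: "norm (axis_emb i0 (y $ i0)) \<le> norm y"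
  using norm_vec_le_scaled[of "axis_emb i0 (y $ i0)" 1 y] by (simp add: axis_emb_def)

lemma inner_Jst_Basis_eq_0:
  assumes "b \<in> Basis" "c \<in> Basis" "(b $ i0 = 0) \<noteq> (c $ i0 = (0::complex))"
  shows "Jst b \<bullet> (c::'n::finite cvec) = 0"
proof -
  obtain j u where b: "b = axis j u" "b $ i0 = 0 \<longleftrightarrow> j \<noteq> i0"
    using assms(1) by (rule Basis_cvecE)
  obtain j' v where c: "c = axis j' v" "c $ i0 = 0 \<longleftrightarrow> j' \<noteq> i0"
    using assms(2) by (rule Basis_cvecE)
  have "j \<noteq> j'" using b c assms(3) by auto
  then show ?thesis unfolding b(1) c(1) inner_axis by (simp add: Jst_def axis_def)
qed

lemma mat_entry_Jdelta:
  assumes "0 < \<delta>" "b \<in> Basis" "c \<in> Basis" "linear (J (Lam_inv i0 \<delta> p))"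
  shows "mat_entry (Jdelta i0 J \<delta> p) b c
    = weight i0 \<delta> b / weight i0 \<delta> c * mat_entry (J (Lam_inv i0 \<delta> p)) b c"
  using assms
  by (simp add: mat_entry_def Jdelta_def inner_Lam_Basis Lam_inv_Basis linear_scale)

locale normalized_acs =
  fixes J :: "'n::finite cvec \<Rightarrow> 'n cvec \<Rightarrow> 'n cvec" and U :: "'n cvec set" and i0 :: 'n
  assumes open_U: "open U" and zero_in_U: "0 \<in> U"
    and almost_complex: "almost_complex_on U J"
    and J_zero: "J 0 = Jst"
    and axis_holomorphic: "J_holomorphic_on {\<zeta>. axis_emb i0 \<zeta> \<in> U} J (axis_emb i0)"
begin

definition J_entry :: "'n cvec \<Rightarrow> 'n cvec \<Rightarrow> 'n cvec \<Rightarrow> real" where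
  "J_entry b c = (\<lambda>q. mat_entry (J q) b c)"

lemma linear_J: "q \<in> U \<Longrightarrow> linear (J q)"
  using almost_complex by (simp add: almost_complex_on_def)

lemma smooth_J_entry:
  "bs \<in> lists Basis \<Longrightarrow> b \<in> Basis \<Longrightarrow> c \<in> Basis \<Longrightarrow> y \<in> U
    \<Longrightarrow> iter_partial bs (J_entry b c) differentiable at y"
  using almost_complex by (simp add: almost_complex_on_def smooth_on_def J_entry_def)

lemma iter_partial_Jdelta_entry:
  assumes "0 < \<delta>" "bs \<in> lists Basis" "b \<in> Basis" "c \<in> Basis" "Lam_inv i0 \<delta> x \<in> U"
  shows "iter_partial bs (\<lambda>p. mat_entry (Jdelta i0 J \<delta> p) b c - mat_entry Jst b c) x
    = weight i0 \<delta> b / weight i0 \<delta> c * prod_list (map (weight i0 \<delta>) bs)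
        * iter_partial bs (J_entry b c) (Lam_inv i0 \<delta> x)
      - (if bs = [] then mat_entry Jst b c else 0)"
proof -
  let ?a = "weight i0 \<delta> b / weight i0 \<delta> c" and ?L = "Lam_inv i0 \<delta>"
  have "open (?L -` U)"
    using open_vimage[OF open_U] bounded_linear_Lam_inv linear_continuous_on by blast
  then have "iter_partial bs (\<lambda>p. mat_entry (Jdelta i0 J \<delta> p) b c - mat_entry Jst b c) x
      = iter_partial bs (\<lambda>q. ?a * J_entry b c (?L q) - mat_entry Jst b c) x"
    using assms by (intro iter_partial_cong_open) (auto simp: mat_entry_Jdelta linear_J J_entry_def)
  also have "\<dots> = ?a * prod_list (map (weight i0 \<delta>) bs) * iter_partial bs (J_entry b c) (?L x)
      - (if bs = [] then mat_entry Jst b c else 0)"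
    using assms
    by (intro iter_partial_affine_comp_diagonal[OF bounded_linear_Lam_inv Lam_inv_Basis open_U])
      (auto intro: smooth_J_entry)
  finally show ?thesis .
qed

lemma J_entry_vanishes_on_axis:
  assumes "y \<in> U" "\<forall>j. j \<noteq> i0 \<longrightarrow> y $ j = 0"
    and b: "b \<in> Basis" "b $ i0 \<noteq> 0" and c: "c \<in> Basis" "c $ i0 = 0"
  shows "J_entry b c y = 0"
proof -
  obtain u where bu: "b = axis i0 u"
    using b by (metis Basis_cvecE)
  obtain j v where cv: "c = axis j v" "j \<noteq> i0"
    using c by (metis Basis_cvecE)
  have y: "axis_emb i0 (y $ i0) = y"
    using assms(2) by (auto simp: axis_emb_def vec_eq_iff)
  have "(axis_emb i0 has_derivative axis i0) (at (y $ i0))"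
  proof -
    have "linear (axis i0 :: complex \<Rightarrow> 'n cvec)"
      by (rule linearI) (auto simp: vec_eq_iff axis_def)
    moreover have "axis_emb i0 = axis i0"
      by (auto simp: axis_emb_def axis_def)
    ultimately show ?thesis
      by (simp add: bounded_linear_imp_has_derivative linear_conv_bounded_linear)
  qed
  then have "frechet_derivative (axis_emb i0) (at (y $ i0)) = axis i0"
    by (simp add: frechet_derivative_at[symmetric])
  then have "J y (axis i0 u) = axis i0 (\<i> * u)"
    using axis_holomorphic assms(1) y unfolding J_holomorphic_on_def by (metis mem_Collect_eq)
  then show ?thesis
    unfolding J_entry_def mat_entry_def bu cv(1) inner_axis using cv(2) by (simp add: axis_def)
qed

lemma iter_partial_J_entry_vanishes_on_axis:
  assumes "y \<in> U" "\<forall>j. j \<noteq> i0 \<longrightarrow> y $ j = 0" "bs \<in> lists {e \<in> Basis. e $ i0 \<noteq> 0}"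
    and "b \<in> Basis" "b $ i0 \<noteq> 0" "c \<in> Basis" "c $ i0 = 0"
  shows "iter_partial bs (J_entry b c) y = 0"
proof -
  let ?A = "{y :: 'n cvec. \<forall>j. j \<noteq> i0 \<longrightarrow> y $ j = 0}"
  have "subspace ?A"
    by (auto simp: subspace_def)
  moreover have "e \<in> ?A" if "e \<in> Basis" "e $ i0 \<noteq> 0" for e
    using that by (elim Basis_cvecE[where i = i0]) (auto simp: axis_def)
  ultimately show ?thesis
    using assms smooth_J_entry J_entry_vanishes_on_axis
    by (intro iter_partial_vanishes_on_subspace[OF open_U, where D = Basis and A = ?A]) auto
qed

lemma uniform_partial_J_entry_bound:
  assumes "cball 0 r \<subseteq> U"
  obtains M where "0 \<le> M"
    "\<And>bs b c q. bs \<in> lists Basis \<Longrightarrow> length bs \<le> m \<Longrightarrow> b \<in> Basis \<Longrightarrow> c \<in> Basis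
      \<Longrightarrow> q \<in> cball 0 r \<Longrightarrow> \<bar>iter_partial bs (J_entry b c) q\<bar> \<le> M"
proof -
  let ?I = "{bs. set bs \<subseteq> Basis \<and> length bs \<le> m} \<times> Basis \<times> Basis
    :: ('n cvec list \<times> 'n cvec \<times> 'n cvec) set"
  let ?f = "\<lambda>(bs, b, c). iter_partial bs (J_entry b c)"
  have "finite ?I"
    by (intro finite_cartesian_product finite_lists_length_le) auto
  moreover have "continuous_on (cball 0 r) (?f i)" if "i \<in> ?I" for i
  proof -
    obtain bs b c where i: "i = (bs, b, c)"
      by (cases i)
    then have "bs \<in> lists Basis" "b \<in> Basis" "c \<in> Basis"
      using that by (auto simp: lists_eq_set)
    then show ?thesis
      unfolding i using assms
      by (intro continuous_at_imp_continuous_on ballI differentiable_imp_continuous_within)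
        (auto intro!: smooth_J_entry)
  qed
  ultimately obtain M where "0 \<le> M" and M: "\<forall>i\<in>?I. \<forall>q\<in>cball 0 r. \<bar>?f i q\<bar> \<le> M"
    using finite_family_uniformly_bounded[OF _ compact_cball] by blast
  show ?thesis
  proof (rule that[OF \<open>0 \<le> M\<close>])
    fix bs :: "'n cvec list" and b c q :: "'n cvec"
    assume "bs \<in> lists Basis" "length bs \<le> m" "b \<in> Basis" "c \<in> Basis" "q \<in> cball 0 r"
    then show "\<bar>iter_partial bs (J_entry b c) q\<bar> \<le> M"
      using M[rule_format, of "(bs, b, c)" q] by (auto simp: lists_eq_set)
  qed
qed

end

text \<open>\<open>M\<close> bounds the derivatives up to order \<open>k + 1\<close>, so that those up to order \<open>k\<close> are
  Lipschitz on the ball.\<close>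
locale normalized_acs_bounded = normalized_acs J U i0
    for J :: "'n::finite cvec \<Rightarrow> 'n cvec \<Rightarrow> 'n cvec" and U i0 +
  fixes r :: real and k :: nat and M :: real
  assumes r_pos: "0 < r" and cball_subset_U: "cball 0 r \<subseteq> U" and M_nonneg: "0 \<le> M"
    and partial_J_entry_bound: "\<And>bs b c q. bs \<in> lists Basis \<Longrightarrow> length bs \<le> Suc k
      \<Longrightarrow> b \<in> Basis \<Longrightarrow> c \<in> Basis \<Longrightarrow> q \<in> cball 0 r \<Longrightarrow> \<bar>iter_partial bs (J_entry b c) q\<bar> \<le> M"
begin

lemma partial_J_entry_lipschitz:
  assumes "bs \<in> lists Basis" "length bs \<le> k" "b \<in> Basis" "c \<in> Basis"
    and "y \<in> cball 0 r" "z \<in> cball 0 r"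
  shows "\<bar>iter_partial bs (J_entry b c) y - iter_partial bs (J_entry b c) z\<bar>
    \<le> real DIM('n cvec) * M * norm (y - z)"
proof (rule lipschitz_of_bounded_partials[OF convex_cball _ _ assms(5,6)])
  fix q e :: "'n cvec"
  assume q: "q \<in> cball 0 r"
  then show "iter_partial bs (J_entry b c) differentiable at q"
    using assms cball_subset_U by (auto intro: smooth_J_entry)
  assume "e \<in> Basis"
  then show "\<bar>partial e (iter_partial bs (J_entry b c)) q\<bar> \<le> M"
    using partial_J_entry_bound[of "e # bs" b c q] assms q by simp
qed

context
  fixes \<delta> R :: real and x :: "'n cvec"
  assumes \<delta>_pos: "0 < \<delta>" and \<delta>_le_1: "\<delta> \<le> 1"
    and norm_x_le: "norm x \<le> R" and sqrt_\<delta>_R_le: "sqrt \<delta> * R \<le> r"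
begin

lemma R_nonneg: "0 \<le> R"
  using norm_x_le by (metis norm_ge_zero order_trans)

lemma lipschitz_term_nonneg: "0 \<le> real DIM('n cvec) * M * R"
  using M_nonneg R_nonneg by simp

lemma norm_Lam_inv_x_le: "norm (Lam_inv i0 \<delta> x) \<le> sqrt \<delta> * R"
  using norm_Lam_inv_le[OF \<delta>_pos \<delta>_le_1, of i0 x] norm_x_le
  by (meson mult_left_mono order_trans real_sqrt_ge_zero less_imp_le \<delta>_pos)

lemma Lam_inv_x_in_cball: "Lam_inv i0 \<delta> x \<in> cball 0 r"
  using norm_Lam_inv_x_le sqrt_\<delta>_R_le by simp

lemma x_in_Lam_image: "x \<in> Lam i0 \<delta> ` U"
  using Lam_Lam_inv[OF \<delta>_pos] Lam_inv_x_in_cball cball_subset_U by (metis image_eqI subsetD)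

lemma Jdelta_entry_deviation_le:
  assumes b: "b \<in> Basis" and c: "c \<in> Basis" and not_w_to_z: "\<not> (b $ i0 \<noteq> 0 \<and> c $ i0 = 0)"
  shows "\<bar>mat_entry (Jdelta i0 J \<delta> x) b c - mat_entry Jst b c\<bar>
    \<le> sqrt \<delta> * (M + real DIM('n cvec) * M * R)"
proof -
  let ?y = "Lam_inv i0 \<delta> x"
  have "mat_entry (Jdelta i0 J \<delta> x) b c - mat_entry Jst b c
      = weight i0 \<delta> b / weight i0 \<delta> c * J_entry b c ?y - mat_entry Jst b c"
    using iter_partial_Jdelta_entry[OF \<delta>_pos _ b c, of "[]" x] Lam_inv_x_in_cball cball_subset_U
    by auto
  also have "\<bar>\<dots>\<bar> \<le> sqrt \<delta> * (M + real DIM('n cvec) * M * R)"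
  proof (cases "b $ i0 = 0 \<longleftrightarrow> c $ i0 = 0")
    case True
    then have "weight i0 \<delta> b / weight i0 \<delta> c = 1"
      using \<delta>_pos by (simp add: weight_def)
    then have "\<bar>weight i0 \<delta> b / weight i0 \<delta> c * J_entry b c ?y - mat_entry Jst b c\<bar>
        = \<bar>J_entry b c ?y - J_entry b c 0\<bar>"
      by (simp add: J_entry_def J_zero)
    also have "\<dots> \<le> real DIM('n cvec) * M * norm ?y"
      using partial_J_entry_lipschitz[of "[]" b c ?y 0] b c Lam_inv_x_in_cball
      by (simp add: order_trans[OF norm_ge_zero])
    also have "\<dots> \<le> real DIM('n cvec) * M * (sqrt \<delta> * R)"
      using norm_Lam_inv_x_le M_nonneg by (intro mult_left_mono) auto
    also have "\<dots> \<le> sqrt \<delta> * (M + real DIM('n cvec) * M * R)"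
      using M_nonneg \<delta>_pos by (simp add: algebra_simps zero_le_mult_iff)
    finally show ?thesis .
  next
    case False
    then have "b $ i0 = 0" "c $ i0 \<noteq> 0"
      using not_w_to_z by auto
    then have "weight i0 \<delta> b / weight i0 \<delta> c = sqrt \<delta>" "mat_entry Jst b c = 0"
      using \<delta>_pos inner_Jst_Basis_eq_0[OF b c] by (auto simp: weight_def real_div_sqrt mat_entry_def)
    moreover have "\<bar>J_entry b c ?y\<bar> \<le> M"
      using partial_J_entry_bound[of "[]" b c ?y] b c Lam_inv_x_in_cball by simp
    ultimately show ?thesis
      using M_nonneg R_nonneg \<delta>_pos
      by (simp add: abs_mult mult_left_mono add_increasing2)
  qed
  finally show ?thesis .
qed

lemma partial_Jdelta_entry_le:
  assumes bs: "bs \<in> lists Basis" "bs \<noteq> []" "length bs \<le> k"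
    and b: "b \<in> Basis" and c: "c \<in> Basis" and not_w_to_z: "\<not> (b $ i0 \<noteq> 0 \<and> c $ i0 = 0)"
  shows "\<bar>iter_partial bs (\<lambda>p. mat_entry (Jdelta i0 J \<delta> p) b c - mat_entry Jst b c) x\<bar>
    \<le> sqrt \<delta> * (M + real DIM('n cvec) * M * R)"
proof -
  let ?y = "Lam_inv i0 \<delta> x" and ?a = "weight i0 \<delta> b / weight i0 \<delta> c"
  let ?P = "prod_list (map (weight i0 \<delta>) bs)" and ?D = "iter_partial bs (J_entry b c) ?y"
  have eq: "iter_partial bs (\<lambda>p. mat_entry (Jdelta i0 J \<delta> p) b c - mat_entry Jst b c) x
      = ?a * ?P * ?D"
    using iter_partial_Jdelta_entry[OF \<delta>_pos bs(1) b c] Lam_inv_x_in_cball cball_subset_U bs(2)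
    by auto
  have "weight i0 \<delta> b \<le> weight i0 \<delta> c"
    using not_w_to_z \<delta>_pos \<delta>_le_1 by (auto simp: weight_def real_le_sqrt_self)
  then have a: "0 \<le> ?a" "?a \<le> 1"
    using weight_pos[OF \<delta>_pos, of i0 b] weight_pos[OF \<delta>_pos, of i0 c] by simp_all
  have P: "?P \<le> sqrt \<delta>"
    using prod_list_weight_le[OF \<delta>_pos \<delta>_le_1 list.set_sel(1)[OF bs(2)]]
      weight_le_sqrt[OF \<delta>_pos \<delta>_le_1]
    by (rule order_trans)
  have D: "\<bar>?D\<bar> \<le> M"
    using partial_J_entry_bound bs b c Lam_inv_x_in_cball by simp
  have "\<bar>?a * ?P * ?D\<bar> \<le> 1 * sqrt \<delta> * M"
    using a P D prod_list_weight_nonneg[OF \<delta>_pos] by (intro abs_mult_mult_le)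
  also have "\<dots> \<le> sqrt \<delta> * (M + real DIM('n cvec) * M * R)"
    using lipschitz_term_nonneg \<delta>_pos by (simp add: mult_left_mono)
  finally show ?thesis
    using eq by simp
qed

lemma partial_J_entry_near_axis_le:
  assumes bs: "bs \<in> lists {e \<in> Basis. e $ i0 \<noteq> 0}" "length bs \<le> k"
    and b: "b \<in> Basis" "b $ i0 \<noteq> 0" and c: "c \<in> Basis" "c $ i0 = 0"
  shows "\<bar>iter_partial bs (J_entry b c) (Lam_inv i0 \<delta> x)\<bar> \<le> real DIM('n cvec) * M * (\<delta> * R)"
proof -
  let ?y = "Lam_inv i0 \<delta> x"
  let ?z = "axis_emb i0 (?y $ i0)"
  have y: "?y \<in> cball 0 r"
    using Lam_inv_x_in_cball .
  then have z: "?z \<in> cball 0 r"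
    using norm_axis_emb_nth_le[of i0 ?y] by simp
  have bs': "bs \<in> lists Basis"
    using bs(1) by auto
  have "iter_partial bs (J_entry b c) ?z = 0"
    using z cball_subset_U bs(1) b c
    by (intro iter_partial_J_entry_vanishes_on_axis) (auto simp: axis_emb_def)
  then have "\<bar>iter_partial bs (J_entry b c) ?y\<bar>
      = \<bar>iter_partial bs (J_entry b c) ?y - iter_partial bs (J_entry b c) ?z\<bar>"
    by simp
  also have "\<dots> \<le> real DIM('n cvec) * M * norm (?y - ?z)"
    using partial_J_entry_lipschitz[OF bs' bs(2) b(1) c(1) y z] .
  also have "\<dots> \<le> real DIM('n cvec) * M * (\<delta> * R)"
    using norm_Lam_inv_minus_axis_le[OF \<delta>_pos, of i0 x] norm_x_le \<delta>_pos M_nonneg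
    by (intro mult_left_mono) (auto intro: order_trans mult_left_mono)
  finally show ?thesis .
qed

lemma partial_Jdelta_entry_w_to_z_le:
  assumes bs: "bs \<in> lists Basis" "length bs \<le> k"
    and b: "b \<in> Basis" "b $ i0 \<noteq> 0" and c: "c \<in> Basis" "c $ i0 = 0"
  shows "\<bar>iter_partial bs (\<lambda>p. mat_entry (Jdelta i0 J \<delta> p) b c - mat_entry Jst b c) x\<bar>
    \<le> sqrt \<delta> * (M + real DIM('n cvec) * M * R)"
proof -
  let ?y = "Lam_inv i0 \<delta> x" and ?C = "M + real DIM('n cvec) * M * R"
  let ?P = "prod_list (map (weight i0 \<delta>) bs)" and ?D = "iter_partial bs (J_entry b c) ?y"
  have "mat_entry Jst b c = 0"
    using inner_Jst_Basis_eq_0[of b c i0] b c by (simp add: mat_entry_def)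
  moreover have "weight i0 \<delta> b / weight i0 \<delta> c = 1 / sqrt \<delta>"
    using b c \<delta>_pos by (simp add: weight_def field_simps)
  ultimately have eq: "iter_partial bs (\<lambda>p. mat_entry (Jdelta i0 J \<delta> p) b c - mat_entry Jst b c) x
      = 1 / sqrt \<delta> * ?P * ?D"
    using iter_partial_Jdelta_entry[OF \<delta>_pos bs(1) b(1) c(1)] cball_subset_U
      Lam_inv_x_in_cball
    by auto
  have "\<bar>1 / sqrt \<delta> * ?P * ?D\<bar> \<le> 1 / sqrt \<delta> * \<delta> * ?C"
  proof (cases "\<exists>e\<in>set bs. e $ i0 = 0")
    case True
    then obtain e where "e \<in> set bs" "e $ i0 = 0" ..
    then have "?P \<le> \<delta>"
      using prod_list_weight_le[OF \<delta>_pos \<delta>_le_1 \<open>e \<in> set bs\<close>, of i0] by (simp add: weight_def)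
    moreover have "\<bar>?D\<bar> \<le> M"
      using partial_J_entry_bound[OF bs(1) _ b(1) c(1)] bs(2) Lam_inv_x_in_cball by simp
    then have "\<bar>?D\<bar> \<le> ?C"
      using lipschitz_term_nonneg by linarith
    ultimately show ?thesis
      using \<delta>_pos prod_list_weight_nonneg[OF \<delta>_pos] by (intro abs_mult_mult_le) auto
  next
    case False
    then have "bs \<in> lists {e \<in> Basis. e $ i0 \<noteq> 0}"
      using bs(1) by auto
    then have "\<bar>?D\<bar> \<le> real DIM('n cvec) * M * (\<delta> * R)"
      by (rule partial_J_entry_near_axis_le[OF _ bs(2) b c])
    also have "\<dots> \<le> \<delta> * ?C"
      using M_nonneg \<delta>_pos by (simp add: algebra_simps zero_le_mult_iff)
    finally have "\<bar>1 / sqrt \<delta> * ?P * ?D\<bar> \<le> 1 / sqrt \<delta> * 1 * (\<delta> * ?C)"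
      using \<delta>_pos prod_list_weight_nonneg[OF \<delta>_pos] prod_list_weight_le_1[OF \<delta>_pos \<delta>_le_1]
      by (intro abs_mult_mult_le) auto
    then show ?thesis
      by (simp add: mult.assoc)
  qed
  also have "\<dots> = sqrt \<delta> * ?C"
    using \<delta>_pos by (simp add: field_simps real_div_sqrt)
  finally show ?thesis
    using eq by simp
qed

lemma partial_Jdelta_deviation_le:
  assumes "bs \<in> lists Basis" "length bs \<le> k" "b \<in> Basis" "c \<in> Basis"
  shows "\<bar>iter_partial bs (\<lambda>p. mat_entry (Jdelta i0 J \<delta> p) b c - mat_entry Jst b c) x\<bar>
    \<le> sqrt \<delta> * (M + real DIM('n cvec) * M * R)"
proof (cases "b $ i0 \<noteq> 0 \<and> c $ i0 = 0")
  case True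
  then show ?thesis
    using assms partial_Jdelta_entry_w_to_z_le by blast
next
  case False
  then show ?thesis
    using assms Jdelta_entry_deviation_le partial_Jdelta_entry_le by (cases "bs = []") auto
qed

end

lemma eventually_partial_Jdelta_deviation_le:
  assumes "compact K" "0 < \<epsilon>"
  shows "\<forall>\<^sub>F \<delta> in at_right 0. K \<subseteq> Lam i0 \<delta> ` U \<and>
    (\<forall>bs\<in>lists Basis. length bs \<le> k \<longrightarrow> (\<forall>b\<in>Basis. \<forall>c\<in>Basis. \<forall>x\<in>K.
      \<bar>iter_partial bs (\<lambda>p. mat_entry (Jdelta i0 J \<delta> p) b c - mat_entry Jst b c) x\<bar> \<le> \<epsilon>))"
proof -
  obtain R where R: "\<And>x. x \<in> K \<Longrightarrow> norm x \<le> R"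
    using compact_imp_bounded[OF \<open>compact K\<close>] by (auto simp: bounded_iff)
  define C where "C = M + real DIM('n cvec) * M * R"
  have lim: "((\<lambda>\<delta>. sqrt \<delta> * a) \<longlongrightarrow> 0) (at_right 0)" for a :: real
    by (auto intro!: tendsto_eq_intros)
  have "\<forall>\<^sub>F \<delta> in at_right 0. 0 < \<delta> \<and> \<delta> < 1 \<and> sqrt \<delta> * R < r \<and> sqrt \<delta> * C < \<epsilon>"
    using eventually_at_right_less order_tendstoD(2)[OF tendsto_ident_at zero_less_one]
      order_tendstoD(2)[OF lim r_pos] order_tendstoD(2)[OF lim \<open>0 < \<epsilon>\<close>]
    by (intro eventually_conj)
  then show ?thesis
  proof (rule eventually_mono)
    fix \<delta> :: real
    assume "0 < \<delta> \<and> \<delta> < 1 \<and> sqrt \<delta> * R < r \<and> sqrt \<delta> * C < \<epsilon>"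
    then have \<delta>: "0 < \<delta>" "\<delta> \<le> 1" "sqrt \<delta> * R \<le> r" "sqrt \<delta> * C \<le> \<epsilon>"
      by auto
    show "K \<subseteq> Lam i0 \<delta> ` U \<and> (\<forall>bs\<in>lists Basis. length bs \<le> k \<longrightarrow> (\<forall>b\<in>Basis. \<forall>c\<in>Basis. \<forall>x\<in>K.
      \<bar>iter_partial bs (\<lambda>p. mat_entry (Jdelta i0 J \<delta> p) b c - mat_entry Jst b c) x\<bar> \<le> \<epsilon>))"
    proof (intro conjI subsetI ballI impI)
      fix x assume "x \<in> K"
      then show "x \<in> Lam i0 \<delta> ` U"
        using x_in_Lam_image[OF \<delta>(1,2) R \<delta>(3)] by blast
    next
      fix bs :: "'n cvec list" and b c x :: "'n cvec"
      assume "bs \<in> lists Basis" "length bs \<le> k" "b \<in> Basis" "c \<in> Basis" "x \<in> K"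
      then show "\<bar>iter_partial bs (\<lambda>p. mat_entry (Jdelta i0 J \<delta> p) b c - mat_entry Jst b c) x\<bar> \<le> \<epsilon>"
        using partial_Jdelta_deviation_le[OF \<delta>(1,2) R[OF \<open>x \<in> K\<close>] \<delta>(3)] \<delta>(4)
        unfolding C_def by (meson order_trans)
    qed
  qed
qed

end

theorem lemma3p2:
  fixes J :: "'n::finite cvec \<Rightarrow> 'n cvec \<Rightarrow> 'n cvec"
    and U :: "'n cvec set" and i0 :: 'n
  assumes "open U" and "0 \<in> U"
    and "almost_complex_on U J"
    and "J 0 = Jst"
    and "J_holomorphic_on {\<zeta>. axis_emb i0 \<zeta> \<in> U} J (axis_emb i0)"
  shows "\<forall>k::nat. k > 0 \<longrightarrow> (\<forall>K. compact K \<longrightarrow>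
          (\<forall>\<epsilon>>0. \<exists>d0>0. \<forall>\<delta>. 0 < \<delta> \<and> \<delta> < d0 \<longrightarrow>
             K \<subseteq> Lam i0 \<delta> ` U \<and>
             (\<forall>bs\<in>lists Basis. length bs \<le> k \<longrightarrow>
               (\<forall>b\<in>Basis. \<forall>c\<in>Basis. \<forall>x\<in>K.
                 \<bar>iter_partial bs (\<lambda>p. mat_entry (Jdelta i0 J \<delta> p) b c - mat_entry Jst b c) x\<bar> \<le> \<epsilon>))))"
proof (intro allI impI)
  fix k :: nat and K :: "'n cvec set" and \<epsilon> :: real
  assume "0 < k" "compact K" "0 < \<epsilon>"
  interpret normalized_acs J U i0
    using assms by unfold_locales
  obtain r where "0 < r" "cball 0 r \<subseteq> U"
    using open_contains_cball open_U zero_in_U by blast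
  obtain M where "0 \<le> M" "\<And>bs b c q. bs \<in> lists Basis \<Longrightarrow> length bs \<le> Suc k \<Longrightarrow> b \<in> Basis
      \<Longrightarrow> c \<in> Basis \<Longrightarrow> q \<in> cball 0 r \<Longrightarrow> \<bar>iter_partial bs (J_entry b c) q\<bar> \<le> M"
    using uniform_partial_J_entry_bound[OF \<open>cball 0 r \<subseteq> U\<close>] by blast
  then interpret normalized_acs_bounded J U i0 r k M
    using \<open>0 < r\<close> \<open>cball 0 r \<subseteq> U\<close> by unfold_locales
  show "\<exists>d0>0. \<forall>\<delta>. 0 < \<delta> \<and> \<delta> < d0 \<longrightarrow> K \<subseteq> Lam i0 \<delta> ` U \<and>
      (\<forall>bs\<in>lists Basis. length bs \<le> k \<longrightarrow> (\<forall>b\<in>Basis. \<forall>c\<in>Basis. \<forall>x\<in>K.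
        \<bar>iter_partial bs (\<lambda>p. mat_entry (Jdelta i0 J \<delta> p) b c - mat_entry Jst b c) x\<bar> \<le> \<epsilon>))"
    using eventually_partial_Jdelta_deviation_le[OF \<open>compact K\<close> \<open>0 < \<epsilon>\<close>]
    by (simp only: eventually_at_right_field imp_conjL)
qed

end
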